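(* Let $r\in(0,1)$, $k\geq1$ an integer, $\beta\in(0,1)$, and $\gamma, C$ real. Let $W_1,W_2,\dots$ be i.i.d.\ copies of a positive random variable $W$ (an i.i.d.\ multiplicative cascade with scale ratio $r$) whose scaling exponents, defined by $\mathbb{E}[W^p]=r^{\zeta_p}$, satisfy $\zeta_p=\gamma p+C(1-\beta^{p/k})$. Then the distribution of $W$ is uniquely determined by its moments. *)

theory Defs
  imports "HOL-Probability.Probability"
begin

definition determined_by_moments :: "real measure \<Rightarrow> bool" where
  "determined_by_moments \<mu> \<longleftrightarrow>
     (\<forall>\<nu>. prob_space \<nu> \<and> sets \<nu> = sets borel \<and>
          (\<forall>n::nat. integrable \<nu> (\<lambda>x. x ^ n) \<and>
                    (\<integral>x. x ^ n \<partial>\<nu>) = (\<integral>x. x ^ n \<partial>\<mu>))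
          \<longrightarrow> \<nu> = \<mu>)"

end

theory Submission
  imports Defs
begin

text \<open>Since \<open>0 \<le> 1 - \<beta> powr (p / k) \<le> 1\<close>, the even moments of \<open>W\<close> grow at most
  geometrically: \<open>E[W^(2n)] = r powr \<zeta>(2n) \<le> r powr (-\<bar>C\<bar>) * (r powr \<gamma>)^(2n)\<close>. For such a
  distribution the Taylor remainders \<open>2 \<bar>t\<bar>^n / n! * E[\<bar>X\<bar>^n]\<close> of the characteristic function
  tend to 0 for every \<open>t\<close>, so the characteristic function, and by Levy's uniqueness theorem the
  distribution, is determined by the moments.\<close>

lemma abs_power_le_one_plus_even_power: "\<bar>x\<bar> ^ n \<le> 1 + x ^ (2 * n)" for x :: real
proof (cases "\<bar>x\<bar> \<le> 1")
  case True
  then have "\<bar>x\<bar> ^ n \<le> 1" by (simp add: power_le_one)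
  moreover have "0 \<le> x ^ (2 * n)" by (simp add: zero_le_even_power)
  ultimately show ?thesis by linarith
next
  case False
  then have "\<bar>x\<bar> ^ n \<le> \<bar>x\<bar> ^ (2 * n)" by (intro power_increasing) auto
  also have "\<dots> = x ^ (2 * n)" by (simp add: power_even_abs)
  finally show ?thesis by linarith
qed

lemma (in real_distribution) integral_abs_power_le:
  assumes "integrable M (\<lambda>x. x ^ (2 * n))"
  shows "(\<integral>x. \<bar>x\<bar> ^ n \<partial>M) \<le> 1 + (\<integral>x. x ^ (2 * n) \<partial>M)"
proof -
  have "integrable M (\<lambda>x. 1 + x ^ (2 * n))"
    using assms by auto
  then have "integrable M (\<lambda>x. \<bar>x\<bar> ^ n)"
    by (rule Bochner_Integration.integrable_bound)
      (auto intro: order_trans[OF _ abs_power_le_one_plus_even_power])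
  then have "(\<integral>x. \<bar>x\<bar> ^ n \<partial>M) \<le> (\<integral>x. 1 + x ^ (2 * n) \<partial>M)"
    using assms by (intro integral_mono abs_power_le_one_plus_even_power) auto
  also have "\<dots> = 1 + (\<integral>x. x ^ (2 * n) \<partial>M)"
    using assms prob_space by (simp add: Bochner_Integration.integral_add space_eq_univ)
  finally show ?thesis .
qed

lemma norm_char_diff_le_abs_moments:
  assumes \<mu>: "real_distribution \<mu>" and \<nu>: "real_distribution \<nu>"
    and int_\<mu>: "\<And>k. k \<le> n \<Longrightarrow> integrable \<mu> (\<lambda>x. x ^ k)"
    and int_\<nu>: "\<And>k. k \<le> n \<Longrightarrow> integrable \<nu> (\<lambda>x. x ^ k)"
    and moments_eq: "\<And>k. k \<le> n \<Longrightarrow> (\<integral>x. x ^ k \<partial>\<nu>) = (\<integral>x. x ^ k \<partial>\<mu>)"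
  shows "cmod (char \<mu> t - char \<nu> t)
           \<le> 2 * \<bar>t\<bar> ^ n / fact n * ((\<integral>x. \<bar>x\<bar> ^ n \<partial>\<mu>) + (\<integral>x. \<bar>x\<bar> ^ n \<partial>\<nu>))"
proof -
  define T where "T = (\<Sum>k \<le> n. ((\<i> * t) ^ k / fact k) * (\<integral>x. x ^ k \<partial>\<mu>))"
  have T_\<nu>: "T = (\<Sum>k \<le> n. ((\<i> * t) ^ k / fact k) * (\<integral>x. x ^ k \<partial>\<nu>))"
    unfolding T_def using moments_eq by simp
  have approx_\<mu>: "cmod (char \<mu> t - T) \<le> 2 * \<bar>t\<bar> ^ n / fact n * (\<integral>x. \<bar>x\<bar> ^ n \<partial>\<mu>)"
    unfolding T_def by (rule real_distribution.char_approx1[OF \<mu> int_\<mu>])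
  have approx_\<nu>: "cmod (char \<nu> t - T) \<le> 2 * \<bar>t\<bar> ^ n / fact n * (\<integral>x. \<bar>x\<bar> ^ n \<partial>\<nu>)"
    unfolding T_\<nu> by (rule real_distribution.char_approx1[OF \<nu> int_\<nu>])
  have "cmod (char \<mu> t - char \<nu> t) \<le> cmod (char \<mu> t - T) + cmod (char \<nu> t - T)"
    using norm_triangle_ineq4[of "char \<mu> t - T" "char \<nu> t - T"] by simp
  also have "\<dots> \<le> 2 * \<bar>t\<bar> ^ n / fact n * (\<integral>x. \<bar>x\<bar> ^ n \<partial>\<mu>)
                 + 2 * \<bar>t\<bar> ^ n / fact n * (\<integral>x. \<bar>x\<bar> ^ n \<partial>\<nu>)"
    using approx_\<mu> approx_\<nu> by (rule add_mono)
  finally show ?thesis by (simp add: distrib_left)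
qed

lemma real_distribution_eq_if_moments_eq:
  assumes \<mu>: "real_distribution \<mu>" and \<nu>: "real_distribution \<nu>"
    and int_\<mu>: "\<And>n. integrable \<mu> (\<lambda>x. x ^ n)" and int_\<nu>: "\<And>n. integrable \<nu> (\<lambda>x. x ^ n)"
    and moments_eq: "\<And>n. (\<integral>x. x ^ n \<partial>\<nu>) = (\<integral>x. x ^ n \<partial>\<mu>)"
    and even_moments_le: "\<And>n. (\<integral>x. x ^ (2 * n) \<partial>\<mu>) \<le> A * B ^ (2 * n)"
  shows "\<nu> = \<mu>"
proof -
  have abs_moment_\<mu>: "(\<integral>x. \<bar>x\<bar> ^ n \<partial>\<mu>) \<le> 1 + A * (B\<^sup>2) ^ n" for n
    using real_distribution.integral_abs_power_le[OF \<mu> int_\<mu>, of n] even_moments_le[of n]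
    by (simp add: power_mult)
  have abs_moment_\<nu>: "(\<integral>x. \<bar>x\<bar> ^ n \<partial>\<nu>) \<le> 1 + A * (B\<^sup>2) ^ n" for n
    using real_distribution.integral_abs_power_le[OF \<nu> int_\<nu>, of n] even_moments_le[of n]
      moments_eq[of "2 * n"]
    by (simp add: power_mult)
  have "char \<mu> t = char \<nu> t" for t
  proof -
    define b where "b n = 4 * (\<bar>t\<bar> ^ n / fact n) + 4 * A * ((\<bar>t\<bar> * B\<^sup>2) ^ n / fact n)" for n
    have "cmod (char \<mu> t - char \<nu> t) \<le> b n" for n
    proof -
      have "cmod (char \<mu> t - char \<nu> t)
              \<le> 2 * \<bar>t\<bar> ^ n / fact n * ((\<integral>x. \<bar>x\<bar> ^ n \<partial>\<mu>) + (\<integral>x. \<bar>x\<bar> ^ n \<partial>\<nu>))"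
        by (rule norm_char_diff_le_abs_moments[OF \<mu> \<nu> int_\<mu> int_\<nu> moments_eq])
      also have "\<dots> \<le> 2 * \<bar>t\<bar> ^ n / fact n * (2 * (1 + A * (B\<^sup>2) ^ n))"
        using abs_moment_\<mu>[of n] abs_moment_\<nu>[of n] by (intro mult_left_mono) auto
      also have "\<dots> = b n"
        by (simp add: b_def field_simps power_mult_distrib)
      finally show ?thesis .
    qed
    moreover have "(\<lambda>n. x ^ n / fact n) \<longlonglongrightarrow> 0" for x :: real
      using summable_LIMSEQ_zero[OF summable_exp] by (simp add: field_simps)
    then have "b \<longlonglongrightarrow> 4 * 0 + 4 * A * 0"
      unfolding b_def by (intro tendsto_intros)
    ultimately have "cmod (char \<mu> t - char \<nu> t) \<le> 0"
      by (intro LIMSEQ_le_const[of b]) auto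
    then show ?thesis by simp
  qed
  then show ?thesis
    using Levy_uniqueness[OF \<mu> \<nu>] by auto
qed

lemma determined_by_moments_if_even_moments_le:
  assumes \<mu>: "real_distribution \<mu>" and int_\<mu>: "\<And>n. integrable \<mu> (\<lambda>x. x ^ n)"
    and even_moments_le: "\<And>n. (\<integral>x. x ^ (2 * n) \<partial>\<mu>) \<le> A * B ^ (2 * n)"
  shows "determined_by_moments \<mu>"
  unfolding determined_by_moments_def
proof (intro allI impI)
  fix \<nu> :: "real measure"
  assume \<nu>: "prob_space \<nu> \<and> sets \<nu> = sets borel \<and>
    (\<forall>n. integrable \<nu> (\<lambda>x. x ^ n) \<and> (\<integral>x. x ^ n \<partial>\<nu>) = (\<integral>x. x ^ n \<partial>\<mu>))"
  then have "real_distribution \<nu>"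
    by (simp add: real_distribution_def real_distribution_axioms_def)
  with \<nu> show "\<nu> = \<mu>"
    by (intro real_distribution_eq_if_moments_eq[OF \<mu> _ int_\<mu> _ _ even_moments_le]) auto
qed

lemma AE_power_eq_powr_of_pos:
  assumes "AE \<omega> in M. W \<omega> > 0"
  shows "AE \<omega> in M. W \<omega> ^ n = W \<omega> powr real n"
  using assms by eventually_elim (simp add: powr_realpow)

lemma integrable_distr_power_of_pos:
  assumes "W \<in> borel_measurable M" and "AE \<omega> in M. W \<omega> > 0"
    and "integrable M (\<lambda>\<omega>. W \<omega> powr real n)"
  shows "integrable (distr M borel W) (\<lambda>x. x ^ n)"
  using assms integrable_cong_AE[OF _ _ AE_power_eq_powr_of_pos[OF assms(2)]]
  by (subst integrable_distr_eq) auto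

lemma integral_distr_power_of_pos:
  assumes "W \<in> borel_measurable M" and "AE \<omega> in M. W \<omega> > 0"
  shows "(\<integral>x. x ^ n \<partial>distr M borel W) = (\<integral>\<omega>. W \<omega> powr real n \<partial>M)"
  using assms integral_cong_AE[OF _ _ AE_power_eq_powr_of_pos[OF assms(2)]]
  by (subst integral_distr) auto

lemma scaling_exponent_powr_le:
  fixes r \<beta> \<gamma> C p :: real
  assumes "0 < r" "r \<le> 1" "\<bar>\<beta>\<bar> \<le> 1" "0 \<le> p"
  shows "r powr (\<gamma> * p + C * (1 - \<beta> powr (p / real k))) \<le> r powr (- \<bar>C\<bar>) * (r powr \<gamma>) powr p"
proof -
  have "0 \<le> 1 - \<beta> powr (p / real k)" "1 - \<beta> powr (p / real k) \<le> 1"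
    using assms(3,4) by (simp_all add: powr_le1)
  then have "\<bar>C * (1 - \<beta> powr (p / real k))\<bar> \<le> \<bar>C\<bar>"
    by (simp add: abs_mult mult_left_le)
  then have "- \<bar>C\<bar> \<le> C * (1 - \<beta> powr (p / real k))"
    by linarith
  then have "r powr (\<gamma> * p + C * (1 - \<beta> powr (p / real k))) \<le> r powr (\<gamma> * p - \<bar>C\<bar>)"
    using assms(1,2) by (intro powr_mono') auto
  also have "\<dots> = r powr (- \<bar>C\<bar>) * (r powr \<gamma>) powr p"
    by (simp add: powr_add[symmetric] powr_powr)
  finally show ?thesis .
qed

theorem mainTheorem5:
  fixes M :: "'a measure" and W :: "'a \<Rightarrow> real"
    and r \<beta> \<gamma> C :: real and k :: nat
  assumes "prob_space M"
    and "W \<in> borel_measurable M"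
    and "AE \<omega> in M. W \<omega> > 0"
    and "0 < r" and "r < 1"
    and "1 \<le> k"
    and "0 < \<beta>" and "\<beta> < 1"
    and "\<forall>p::real. p > 0 \<longrightarrow>
           integrable M (\<lambda>\<omega>. W \<omega> powr p) \<and>
           (\<integral>\<omega>. W \<omega> powr p \<partial>M) = r powr (\<gamma> * p + C * (1 - \<beta> powr (p / real k)))"
  shows "determined_by_moments (distr M borel W)"
proof -
  let ?\<mu> = "distr M borel W"
  have \<mu>: "real_distribution ?\<mu>"
    using assms(1,2) by (simp add: prob_space.real_distribution_distr)
  have moment_formula: "integrable ?\<mu> (\<lambda>x. x ^ n) \<and>
      (\<integral>x. x ^ n \<partial>?\<mu>) = r powr (\<gamma> * n + C * (1 - \<beta> powr (n / real k)))" for n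
  proof (cases "n = 0")
    case True
    \<comment> \<open>the hypothesis only covers \<open>p > 0\<close>, but \<open>\<zeta>(0) = 0\<close> matches the 0-th moment\<close>
    then show ?thesis
      using \<mu> prob_space.prob_space[OF real_distribution.axioms(1)[OF \<mu>]] assms(4,7)
      by (auto intro: finite_measure.integrable_const prob_space.axioms(1) real_distribution.axioms(1))
  next
    case False
    then show ?thesis
      using assms(9) integrable_distr_power_of_pos[OF assms(2,3)] integral_distr_power_of_pos[OF assms(2,3)]
      by simp
  qed
  have "(\<integral>x. x ^ (2 * n) \<partial>?\<mu>) \<le> r powr (- \<bar>C\<bar>) * (r powr \<gamma>) ^ (2 * n)" for n
  proof -
    have "(\<integral>x. x ^ (2 * n) \<partial>?\<mu>)
        = r powr (\<gamma> * real (2 * n) + C * (1 - \<beta> powr (real (2 * n) / real k)))"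
      using moment_formula[of "2 * n"] by simp
    also have "\<dots> \<le> r powr (- \<bar>C\<bar>) * (r powr \<gamma>) powr real (2 * n)"
      using assms(4,5,7,8) by (intro scaling_exponent_powr_le) auto
    also have "(r powr \<gamma>) powr real (2 * n) = (r powr \<gamma>) ^ (2 * n)"
      using assms(4) by (intro powr_realpow) simp
    finally show ?thesis .
  qed
  with \<mu> moment_formula show ?thesis
    by (intro determined_by_moments_if_even_moments_le) auto
qed

end
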